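(* Let $k\ge2$, $\theta\in\mathbb{R}\setminus\mathbb{Q}$, $p_1,\ldots,p_k\in\mathbb{Z}\setminus\{0\}$ with $\sum_{j=1}^kp_j=0$, and $\xi_1,\ldots,\xi_{k-1}\in\mathbb{Q}\cap[0,1)$ with $\{\sum_{j=1}^{k-1}\xi_j\}\in(0,1)\setminus\{1/2\}$. Consider System A: $\hat\theta_j=p_j\theta+\xi_j$ ($1\le j\le k-1$), $\hat\theta_k=p_k\theta$; and System B: $\hat\theta_j=p_j\theta+\xi_j$ ($1\le j\le k-1$), $\hat\theta_{k,l}=\mathrm{sgn}(p_k)\theta+\frac{l}{|p_k|}$ ($0\le l\le|p_k|-1$). Then Systems A and B are equivalent, i.e. they have the same effective difference number.
   Context: For a system $\hat\theta_i=q_i\theta+\zeta_i$, $i\in I$ ($I$ finite), with $\theta$ irrational, $q_i\in\mathbb{Z}\setminus\{0\}$, $\zeta_i\in\mathbb{Q}\cap[0,1)$, and for $\eta\in\mathbb{Q}$, set $\eta(\zeta_i)=\{\zeta_i-q_i\eta\}$ (fractional part), $k_0^+(\eta)=\#\{i:\eta(\zeta_i)=0,q_i>0\}$, $k_0^-(\eta)=\#\{i:\eta(\zeta_i)=0,q_i<0\}$. The absolute difference number for $\eta$ is $|k_0^+(\eta)-k_0^-(\eta)|$, and the effective difference number of the system is $\max\{|k_0^+(\eta)-k_0^-(\eta)|:\eta\in\mathbb{Q}\}$. Two such systems are called equivalent if their effective difference numbers coincide. In System A the $k$-th equation has $\zeta=0$. $\mathrm{sgn}(a)=\pm1$ according as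 $\pm a>0$. *)

theory Defs
  imports Complex_Main
begin

text \<open>A system  theta_i = q_i theta + zeta_i  (i in a finite index set) is represented by the
  list of its coefficient pairs (q_i, zeta_i), with multiplicity.  The irrational theta
  does not enter the difference numbers.\<close>

type_synonym system = "(int \<times> rat) list"

definition eta_shift :: "rat \<Rightarrow> int \<Rightarrow> rat \<Rightarrow> rat" where
  "eta_shift \<eta> q \<zeta> = frac (\<zeta> - of_int q * \<eta>)"

definition k0_plus :: "system \<Rightarrow> rat \<Rightarrow> nat" where
  "k0_plus S \<eta> = length (filter (\<lambda>(q, \<zeta>). eta_shift \<eta> q \<zeta> = 0 \<and> q > 0) S)"

definition k0_minus :: "system \<Rightarrow> rat \<Rightarrow> nat" where
  "k0_minus S \<eta> = length (filter (\<lambda>(q, \<zeta>). eta_shift \<eta> q \<zeta> = 0 \<and> q < 0) S)"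

definition abs_diff_number :: "system \<Rightarrow> rat \<Rightarrow> int" where
  "abs_diff_number S \<eta> = \<bar>int (k0_plus S \<eta>) - int (k0_minus S \<eta>)\<bar>"

definition eff_diff_number :: "system \<Rightarrow> int" where
  "eff_diff_number S = Max (range (abs_diff_number S))"

definition equivalent_systems :: "system \<Rightarrow> system \<Rightarrow> bool" where
  "equivalent_systems S T \<longleftrightarrow> eff_diff_number S = eff_diff_number T"

definition systemA :: "nat \<Rightarrow> (nat \<Rightarrow> int) \<Rightarrow> (nat \<Rightarrow> rat) \<Rightarrow> system" where
  "systemA k p \<xi> = map (\<lambda>j. (p j, \<xi> j)) [1..<k] @ [(p k, 0)]"

definition systemB :: "nat \<Rightarrow> (nat \<Rightarrow> int) \<Rightarrow> (nat \<Rightarrow> rat) \<Rightarrow> system" where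
  "systemB k p \<xi> = map (\<lambda>j. (p j, \<xi> j)) [1..<k] @
     map (\<lambda>l. (sgn (p k), of_nat l / of_int \<bar>p k\<bar>)) [0..<nat \<bar>p k\<bar>]"

end

theory Submission
  imports Defs
begin

text \<open>For every \<open>\<eta>\<close>, the \<open>|q|\<close> equations \<open>sgn(q) \<theta> + l/|q|\<close> all carry the sign of \<open>q\<close>,
  and \<open>{l/|q| - sgn(q) \<eta>} = 0\<close> holds for exactly one \<open>l < |q|\<close> when \<open>q \<eta> \<in> \<int>\<close> and for
  none otherwise, i.e. exactly when \<open>{-q \<eta>} = 0\<close>.  So this block contributes to
  \<open>k\<^sub>0\<^sup>+(\<eta>)\<close> and \<open>k\<^sub>0\<^sup>-(\<eta>)\<close> precisely what the single equation \<open>q \<theta>\<close> contributes, and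
  Systems A and B have the same difference number for every \<open>\<eta>\<close>.\<close>

definition split_equation :: "int \<Rightarrow> system" where
  "split_equation q = map (\<lambda>l. (sgn q, of_nat l / of_int \<bar>q\<bar>)) [0..<nat \<bar>q\<bar>]"

lemma divide_of_int_in_Ints_iff:
  fixes a n :: int
  assumes "n > 0"
  shows "(of_int a / of_int n :: 'a :: field_char_0) \<in> \<int> \<longleftrightarrow> n dvd a"
proof
  assume "(of_int a / of_int n :: 'a) \<in> \<int>"
  then obtain m where "(of_int a / of_int n :: 'a) = of_int m"
    by (auto elim: Ints_cases)
  then have "(of_int a :: 'a) = of_int (n * m)"
    using assms by (simp add: field_simps)
  then show "n dvd a"
    by (simp only: of_int_eq_iff) simp
qed (use assms in auto)

lemma residues_in_Ints_eq:
  fixes n :: int and x :: "'a :: floor_ceiling"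
  assumes "n > 0"
  shows "{l. l < nat n \<and> of_nat l / of_int n - x \<in> \<int>} =
    (if of_int n * x \<in> \<int> then {nat (\<lfloor>of_int n * x\<rfloor> mod n)} else {})"
proof (cases "of_int n * x \<in> \<int>")
  case True
  then obtain t where t: "of_int n * x = (of_int t :: 'a)"
    by (auto elim: Ints_cases)
  then have x: "x = of_int t / of_int n"
    using assms by (simp add: eq_divide_eq mult.commute)
  have "l < nat n \<and> of_nat l / of_int n - x \<in> \<int> \<longleftrightarrow> l = nat (t mod n)" for l
  proof -
    have "of_nat l / of_int n - x = (of_int (int l - t) / of_int n :: 'a)"
      by (simp add: x diff_divide_distrib)
    also have "\<dots> \<in> \<int> \<longleftrightarrow> int l mod n = t mod n"
      unfolding divide_of_int_in_Ints_iff[OF assms] by (rule mod_eq_dvd_iff[symmetric])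
    finally have "of_nat l / of_int n - x \<in> \<int> \<longleftrightarrow> int l mod n = t mod n" .
    moreover have "l < nat n \<longleftrightarrow> int l mod n = int l"
      using assms by (auto simp: zmod_trivial_iff)
    ultimately show ?thesis
      using assms by (auto simp: pos_mod_sign)
  qed
  then show ?thesis
    using True t by auto
next
  case False
  have "\<not> (of_nat l / of_int n - x \<in> \<int>)" for l
  proof
    assume "of_nat l / of_int n - x \<in> \<int>"
    then obtain m where "of_nat l / of_int n - x = (of_int m :: 'a)"
      by (auto elim: Ints_cases)
    then have "of_int n * x = (of_int (int l - n * m) :: 'a)"
      using assms by (simp add: field_simps)
    with False show False
      by auto
  qed
  with False show ?thesis
    by auto
qed

lemma count_residues_in_Ints:
  fixes n :: int and x :: "'a :: floor_ceiling"
  assumes "n > 0"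
  shows "length (filter (\<lambda>l. of_nat l / of_int n - x \<in> \<int>) [0..<nat n]) =
    (if of_int n * x \<in> \<int> then 1 else 0)"
  using residues_in_Ints_eq[OF assms, of x]
  by (simp add: length_filter_conv_card cong: conj_cong)

lemma count_split_equation:
  assumes "q \<noteq> 0" and "P (sgn q) \<longleftrightarrow> P q"
  shows "length (filter (\<lambda>(q', \<zeta>). eta_shift \<eta> q' \<zeta> = 0 \<and> P q') (split_equation q)) =
    length (filter (\<lambda>(q', \<zeta>). eta_shift \<eta> q' \<zeta> = 0 \<and> P q') [(q, 0)])"
proof (cases "P q")
  case True
  have "of_int \<bar>q\<bar> * (of_int (sgn q) * \<eta>) = of_int q * \<eta>"
    by (metis abs_mult_sgn mult.assoc of_int_mult)
  note count = count_residues_in_Ints[of "\<bar>q\<bar>" "of_int (sgn q) * \<eta> :: rat", unfolded this]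
  have "- (of_int q * \<eta>) \<in> \<int> \<longleftrightarrow> of_int q * \<eta> \<in> \<int>"
    using minus_in_Ints_iff by blast
  with True assms count show ?thesis
    by (simp add: split_equation_def eta_shift_def o_def frac_eq_0_iff)
qed (use assms in \<open>simp add: split_equation_def filter_empty_conv\<close>)

lemma k0_plus_append: "k0_plus (S @ T) \<eta> = k0_plus S \<eta> + k0_plus T \<eta>"
  by (simp add: k0_plus_def)

lemma k0_minus_append: "k0_minus (S @ T) \<eta> = k0_minus S \<eta> + k0_minus T \<eta>"
  by (simp add: k0_minus_def)

lemma abs_diff_number_split_equation:
  assumes "q \<noteq> 0"
  shows "abs_diff_number (S @ split_equation q) = abs_diff_number (S @ [(q, 0)])"
proof
  fix \<eta>
  have "k0_plus (split_equation q) \<eta> = k0_plus [(q, 0)] \<eta>"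
    unfolding k0_plus_def using assms by (intro count_split_equation) (simp_all add: sgn_if)
  moreover have "k0_minus (split_equation q) \<eta> = k0_minus [(q, 0)] \<eta>"
    unfolding k0_minus_def using assms by (intro count_split_equation) (simp_all add: sgn_if)
  ultimately show "abs_diff_number (S @ split_equation q) \<eta> = abs_diff_number (S @ [(q, 0)]) \<eta>"
    by (simp add: abs_diff_number_def k0_plus_append k0_minus_append)
qed

theorem lemma4p2:
  fixes k :: nat and \<theta> :: real and p :: "nat \<Rightarrow> int" and \<xi> :: "nat \<Rightarrow> rat"
  assumes "k \<ge> 2"
    and "\<theta> \<notin> \<rat>"
    and "\<forall>j\<in>{1..k}. p j \<noteq> 0"
    and "(\<Sum>j=1..k. p j) = 0"
    and "\<forall>j\<in>{1..k-1}. 0 \<le> \<xi> j \<and> \<xi> j < 1"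
    and "frac (\<Sum>j=1..k-1. \<xi> j) \<in> {0<..<1} - {1/2}"
  shows "equivalent_systems (systemA k p \<xi>) (systemB k p \<xi>)"
proof -
  have "p k \<noteq> 0"
    using assms(1,3) by auto
  then have "abs_diff_number (systemB k p \<xi>) = abs_diff_number (systemA k p \<xi>)"
    unfolding systemA_def systemB_def split_equation_def[symmetric]
    by (rule abs_diff_number_split_equation)
  then show ?thesis
    by (simp add: equivalent_systems_def eff_diff_number_def)
qed

end
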